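(* Let $H$ be a separable Hilbert space, $(\Omega,\mathscr F,\mathbb P)$ a probability space, and $\Psi:\Omega\to B(H)$ a strongly measurable random operator such that $\Psi(\omega)$ is a positive contraction ($0\le\Psi(\omega)\le I$) for every $\omega$. Assume there is a constant $0<C<1$ with \[ \mathbb E\|\Psi x\|^{2}\ge C\|x\|^{2}\quad\text{for all }x\in H, \] equivalently $\int_\Omega\Psi^*\Psi\,d\mathbb P\ge CI$. Let $\Psi_1,\Psi_2,\dots$ be i.i.d. copies of $\Psi$, and for $k\ge1$ put $T_k=\Psi_k(I-\Psi_{k-1})\cdots(I-\Psi_1)$ (with $T_1=\Psi_1$). Then: (1) for every $x\in H$, $\displaystyle\lim_{n\to\infty}\mathbb E\Big\|x-\sum_{k=1}^{n}T_kx\Big\|^{2}=0$; (2) for every $x\in H$, $\displaystyle x=\lim_{n\to\infty}\sum_{k=1}^{n}T_kx$ almost surely; i.e. $I=\sum_{k=1}^\infty T_k$ almost surely (strongly); (3) for every $x\in H$, the limit below exists and \[ C\|x\|^{2}\le\lim_{n\to\infty}\mathbb E\Big[\sum_{k=1}^{n}\|T_kx\|^{2}\Big]\le\|x\|^{2}, \] so that $\{T_n\}_{n\in\mathbb N}$ forms a random operator-valued frame.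
   Context: A random operator $\Psi:\Omega\to B(H)$ is measurable in the strong operator sense: for each $x\in H$, $\omega\mapsto\Psi(\omega)x$ is measurable as an $H$-valued function. $\mathbb E\|\Psi x\|^2=\int_\Omega\|\Psi(\omega)x\|^2\,d\mathbb P(\omega)$, and $\int_\Omega\Psi^*\Psi\,d\mathbb P$ is the bounded positive operator $M$ with $\langle x,Mx\rangle=\mathbb E\|\Psi x\|^2$. A positive contraction is a selfadjoint $T$ with $0\le T\le I$. Inner product is linear in the second argument. *)

theory Defs
  imports "HOL-Probability.Probability"
begin

text \<open>Hilbert space H: a type of class real_inner and complete_space.
  Separability: existence of a countable dense subset.\<close>

definition separable_space :: "'a::topological_space itself \<Rightarrow> bool" where
  "separable_space _ \<longleftrightarrow> (\<exists>D::'a set. countable D \<and> closure D = UNIV)"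

definition positive_contraction :: "('a::real_inner \<Rightarrow>\<^sub>L 'a) \<Rightarrow> bool" where
  "positive_contraction T \<longleftrightarrow>
     (\<forall>x y. inner (T x) y = inner x (T y)) \<and>
     (\<forall>x. 0 \<le> inner x (T x) \<and> inner x (T x) \<le> inner x x)"

definition strongly_measurable_op :: "'w measure \<Rightarrow> ('w \<Rightarrow> ('a::real_normed_vector \<Rightarrow>\<^sub>L 'a)) \<Rightarrow> bool" where
  "strongly_measurable_op M \<Psi> \<longleftrightarrow> (\<forall>x. (\<lambda>\<omega>. \<Psi> \<omega> x) \<in> borel_measurable M)"

text \<open>The sigma-algebra on B(H) generated by the evaluation maps T \<mapsto> T x
  (strong operator measurability); used to speak of distributions / independence.\<close>
definition SOT_space :: "('a::real_normed_vector \<Rightarrow>\<^sub>L 'a) measure" where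
  "SOT_space = sigma UNIV (\<Union>x. {(\<lambda>T. blinfun_apply T x) -` B | B. B \<in> sets borel})"

text \<open>Products (I - \<Psi>_k)...(I - \<Psi>_1), with \<Psi>s indexed from 1.\<close>
fun prod_compl :: "(nat \<Rightarrow> 'w \<Rightarrow> ('a::real_normed_vector \<Rightarrow>\<^sub>L 'a)) \<Rightarrow> nat \<Rightarrow> 'w \<Rightarrow> ('a \<Rightarrow>\<^sub>L 'a)" where
  "prod_compl \<Psi>s 0 \<omega> = id_blinfun"
| "prod_compl \<Psi>s (Suc k) \<omega> = (id_blinfun - \<Psi>s (Suc k) \<omega>) o\<^sub>L prod_compl \<Psi>s k \<omega>"

definition Top :: "(nat \<Rightarrow> 'w \<Rightarrow> ('a::real_normed_vector \<Rightarrow>\<^sub>L 'a)) \<Rightarrow> nat \<Rightarrow> 'w \<Rightarrow> ('a \<Rightarrow>\<^sub>L 'a)" where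
  "Top \<Psi>s k \<omega> = \<Psi>s k \<omega> o\<^sub>L prod_compl \<Psi>s (k - 1) \<omega>"

end

theory Submission
  imports Defs
begin

text \<open>
  Write \<open>R\<^sub>n = (I - \<Psi>\<^sub>n) \<dots> (I - \<Psi>\<^sub>1)\<close> (\<open>prod_compl\<close>), so that
  \<open>x - (T\<^sub>1 x + \<dots> + T\<^sub>n x) = R\<^sub>n x\<close> and \<open>T\<^sub>n\<^sub>+\<^sub>1 x = \<Psi>\<^sub>n\<^sub>+\<^sub>1 (R\<^sub>n x)\<close>.
  A positive contraction \<open>T\<close> satisfies \<open>\<parallel>y - T y\<parallel>\<^sup>2 + \<parallel>T y\<parallel>\<^sup>2 \<le> \<parallel>y\<parallel>\<^sup>2\<close>. Since \<open>\<Psi>\<^sub>n\<^sub>+\<^sub>1\<close>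
  is independent of \<open>R\<^sub>n x\<close> and distributed like \<open>\<Psi>\<close>, integrating first over \<open>\<Psi>\<^sub>n\<^sub>+\<^sub>1\<close> shows
  that \<open>a\<^sub>n = E\<parallel>R\<^sub>n x\<parallel>\<^sup>2\<close> and \<open>b\<^sub>n = E\<parallel>T\<^sub>n\<^sub>+\<^sub>1 x\<parallel>\<^sup>2\<close> satisfy
  \<open>a\<^sub>n\<^sub>+\<^sub>1 + b\<^sub>n \<le> a\<^sub>n\<close> and \<open>C a\<^sub>n \<le> b\<^sub>n\<close>. Hence \<open>a\<^sub>n \<le> (1 - C)\<^sup>n \<parallel>x\<parallel>\<^sup>2\<close>, which gives
  mean-square convergence; summability of \<open>a\<^sub>n\<close> makes \<open>\<Sum> \<parallel>R\<^sub>n x\<parallel>\<^sup>2\<close> finite almost surely,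
  which gives almost sure convergence; and \<open>\<Sum> b\<^sub>n\<close> lies between \<open>b\<^sub>0 \<ge> C \<parallel>x\<parallel>\<^sup>2\<close> and
  \<open>a\<^sub>0 = \<parallel>x\<parallel>\<^sup>2\<close>, which gives the frame bounds.
\<close>

section \<open>Strong measurability on separable spaces\<close>

lemma separable_space_dense_sequence:
  assumes "separable_space TYPE('a)"
  obtains d :: "nat \<Rightarrow> 'a::metric_space" where "\<And>y e. 0 < e \<Longrightarrow> \<exists>m. dist (d m) y < e"
proof -
  obtain D :: "'a set" where D: "countable D" "closure D = UNIV"
    using assms unfolding separable_space_def by blast
  have "\<exists>m. dist (from_nat_into D m) y < e" if "0 < e" for y e
  proof -
    have "y \<in> closure D" using D by simp
    then obtain z where "z \<in> D" "dist z y < e"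
      using \<open>0 < e\<close> by (meson closure_approachable)
    then show ?thesis using from_nat_into_surj[OF D(1)] by metis
  qed
  then show thesis by (rule that)
qed

lemma borel_measurable_blinfun_apply_strong:
  fixes A :: "'w \<Rightarrow> ('a::real_normed_vector \<Rightarrow>\<^sub>L 'b::real_normed_vector)"
  assumes "separable_space TYPE('a)"
    and A: "\<And>y. (\<lambda>\<omega>. A \<omega> y) \<in> borel_measurable M"
    and f: "f \<in> borel_measurable M"
  shows "(\<lambda>\<omega>. A \<omega> (f \<omega>)) \<in> borel_measurable M"
proof -
  obtain d :: "nat \<Rightarrow> 'a" where d: "\<And>y e. 0 < e \<Longrightarrow> \<exists>m. dist (d m) y < e"
    using separable_space_dense_sequence[OF assms(1)] by blast
  \<comment> \<open>\<open>'a\<close> need not be second countable, so approximate \<open>f\<close> by the countably-valued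
    measurable maps \<open>d \<circ> m j\<close>.\<close>
  define m where "m j \<omega> = (LEAST i. dist (d i) (f \<omega>) < 1 / Suc j)" for j \<omega>
  have [measurable]: "(\<lambda>\<omega>. dist (d i) (f \<omega>)) \<in> borel_measurable M" for i
    by (rule borel_measurable_continuous_on[OF _ f]) (intro continuous_intros)
  have m_measurable: "m j \<in> measurable M (count_space UNIV)" for j
    unfolding m_def by measurable
  have m_close: "dist (d (m j \<omega>)) (f \<omega>) < 1 / Suc j" for j \<omega>
    unfolding m_def by (rule LeastI_ex) (simp add: d)
  have "(\<lambda>\<omega>. A \<omega> (d (m j \<omega>))) \<in> borel_measurable M" for j
    by (rule measurable_compose_countable[OF _ m_measurable]) (rule A)
  moreover have "(\<lambda>j. d (m j \<omega>)) \<longlonglongrightarrow> f \<omega>" for \<omega>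
  proof (rule tendsto_dist_iff[THEN iffD2], rule Lim_null_comparison)
    show "\<forall>\<^sub>F j in sequentially. norm (dist (d (m j \<omega>)) (f \<omega>)) \<le> 1 / real (Suc j)"
      using m_close by (simp add: less_imp_le)
    show "(\<lambda>j. 1 / real (Suc j)) \<longlonglongrightarrow> 0"
      by (rule LIMSEQ_inverse_real_of_nat[unfolded inverse_eq_divide])
  qed
  then have "(\<lambda>j. A \<omega> (d (m j \<omega>))) \<longlonglongrightarrow> A \<omega> (f \<omega>)" for \<omega>
    by (intro blinfun.tendsto tendsto_const)
  ultimately show ?thesis by (rule borel_measurable_LIMSEQ_metric)
qed

lemma borel_measurable_diff_blinfun_apply_strong:
  fixes A :: "'w \<Rightarrow> ('a::real_normed_vector \<Rightarrow>\<^sub>L 'a)"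
  assumes "separable_space TYPE('a)"
    and "\<And>y. (\<lambda>\<omega>. A \<omega> y) \<in> borel_measurable M"
    and "f \<in> borel_measurable M"
  shows "(\<lambda>\<omega>. f \<omega> - A \<omega> (f \<omega>)) \<in> borel_measurable M"
proof -
  have "(\<lambda>\<omega>. y - A \<omega> y) \<in> borel_measurable M" for y
    by (rule borel_measurable_continuous_on[OF _ assms(2)]) (intro continuous_intros)
  then have "(\<lambda>\<omega>. (id_blinfun - A \<omega>) (f \<omega>)) \<in> borel_measurable M"
    by (intro borel_measurable_blinfun_apply_strong[OF assms(1) _ assms(3)]) (simp add: blinfun.diff_left)
  then show ?thesis by (simp add: blinfun.diff_left)
qed

lemma space_SOT_space [simp]: "space SOT_space = UNIV"
  unfolding SOT_space_def by (simp add: space_measure_of_conv)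

lemma SOT_space_apply_measurable: "(\<lambda>T. blinfun_apply T y) \<in> borel_measurable SOT_space"
proof (rule measurableI)
  fix B :: "'a set" assume "B \<in> sets borel"
  then show "(\<lambda>T. blinfun_apply T y) -` B \<inter> space SOT_space \<in> sets SOT_space"
    unfolding SOT_space_def by (auto simp: space_measure_of_conv sets_measure_of)
qed simp

lemma measurable_SOT_space_iff:
  fixes \<Psi> :: "'w \<Rightarrow> ('a::real_normed_vector \<Rightarrow>\<^sub>L 'a)"
  shows "\<Psi> \<in> measurable M SOT_space \<longleftrightarrow> strongly_measurable_op M \<Psi>"
proof
  assume "\<Psi> \<in> measurable M SOT_space"
  then show "strongly_measurable_op M \<Psi>"
    unfolding strongly_measurable_op_def
    using measurable_compose[OF _ SOT_space_apply_measurable] by blast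
next
  assume "strongly_measurable_op M \<Psi>"
  then show "\<Psi> \<in> measurable M SOT_space"
    unfolding SOT_space_def strongly_measurable_op_def
  proof (intro measurable_measure_of; clarsimp)
    fix x :: 'a and B :: "'a set"
    assume "\<forall>x. (\<lambda>\<omega>. \<Psi> \<omega> x) \<in> borel_measurable M" "B \<in> sets borel"
    then have "(\<lambda>\<omega>. \<Psi> \<omega> x) -` B \<inter> space M \<in> sets M" by (blast intro: measurable_sets)
    then show "\<Psi> -` ((\<lambda>T. blinfun_apply T x) -` B) \<inter> space M \<in> sets M" by (simp add: vimage_def)
  qed
qed

lemma SOT_space_pair_apply_measurable:
  assumes "separable_space TYPE('a::real_normed_vector)"
  shows "(\<lambda>p. blinfun_apply (fst p) (snd p)) \<in> borel_measurable (SOT_space \<Otimes>\<^sub>M (borel :: 'a measure))"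
    and "(\<lambda>p. snd p - blinfun_apply (fst p) (snd p)) \<in> borel_measurable (SOT_space \<Otimes>\<^sub>M (borel :: 'a measure))"
proof -
  have "(\<lambda>p. blinfun_apply (fst p) y) \<in> borel_measurable (SOT_space \<Otimes>\<^sub>M (borel :: 'a measure))" for y
    by (rule measurable_compose[OF measurable_fst SOT_space_apply_measurable])
  then show "(\<lambda>p. blinfun_apply (fst p) (snd p)) \<in> borel_measurable (SOT_space \<Otimes>\<^sub>M (borel :: 'a measure))"
    and "(\<lambda>p. snd p - blinfun_apply (fst p) (snd p)) \<in> borel_measurable (SOT_space \<Otimes>\<^sub>M (borel :: 'a measure))"
    by (rule borel_measurable_blinfun_apply_strong[OF assms _ measurable_snd]
        borel_measurable_diff_blinfun_apply_strong[OF assms _ measurable_snd])+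
qed

lemma prod_compl_Suc_apply:
  "prod_compl \<Phi> (Suc n) \<omega> x = prod_compl \<Phi> n \<omega> x - \<Phi> (Suc n) \<omega> (prod_compl \<Phi> n \<omega> x)"
  by (simp add: blinfun.diff_left)

declare prod_compl.simps(2) [simp del]

lemma Top_Suc_apply: "Top \<Phi> (Suc n) \<omega> x = \<Phi> (Suc n) \<omega> (prod_compl \<Phi> n \<omega> x)"
  by (simp add: Top_def)

lemma diff_sum_Top_eq_prod_compl: "x - (\<Sum>k\<in>{1..n}. Top \<Phi> k \<omega> x) = prod_compl \<Phi> n \<omega> x"
proof (induction n)
  case (Suc n)
  have "x - (\<Sum>k\<in>{1..Suc n}. Top \<Phi> k \<omega> x) = (x - (\<Sum>k\<in>{1..n}. Top \<Phi> k \<omega> x)) - Top \<Phi> (Suc n) \<omega> x"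
    by (simp add: atLeastAtMostSuc_conv algebra_simps)
  also have "\<dots> = prod_compl \<Phi> (Suc n) \<omega> x"
    by (simp only: Suc.IH Top_Suc_apply prod_compl_Suc_apply)
  finally show ?case .
qed simp

lemma prod_compl_cong:
  "(\<And>k. 1 \<le> k \<Longrightarrow> k \<le> n \<Longrightarrow> \<Phi> k \<omega> = \<Phi>' k \<omega>') \<Longrightarrow> prod_compl \<Phi> n \<omega> = prod_compl \<Phi>' n \<omega>'"
  by (induction n) (auto simp: prod_compl.simps)

lemma borel_measurable_prod_compl:
  fixes \<Phi> :: "nat \<Rightarrow> 'w \<Rightarrow> ('a::real_normed_vector \<Rightarrow>\<^sub>L 'a)"
  assumes "separable_space TYPE('a)"
    and "\<And>k y. 1 \<le> k \<Longrightarrow> k \<le> n \<Longrightarrow> (\<lambda>\<omega>. \<Phi> k \<omega> y) \<in> borel_measurable M"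
  shows "(\<lambda>\<omega>. prod_compl \<Phi> n \<omega> x) \<in> borel_measurable M"
  using assms(2)
proof (induction n)
  case (Suc n)
  then show ?case
    by (simp only: prod_compl_Suc_apply)
      (intro borel_measurable_diff_blinfun_apply_strong[OF assms(1)]; simp)
qed simp

text \<open>The point is \<open>T\<^sup>2 \<le> T\<close>, i.e. \<open>\<langle>T y, T y\<rangle> \<le> \<langle>y, T y\<rangle>\<close>, which follows from
  \<open>0 \<le> T\<close> applied to \<open>y - T y\<close> and \<open>T \<le> I\<close> applied to \<open>T y\<close>.\<close>

lemma positive_contraction_norm_diff_sq:
  fixes T :: "'a::real_inner \<Rightarrow>\<^sub>L 'a"
  assumes "positive_contraction T"
  shows "(norm (y - T y))\<^sup>2 + (norm (T y))\<^sup>2 \<le> (norm y)\<^sup>2"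
proof -
  have selfadjoint: "inner y (T (T y)) = inner (T y) (T y)"
    and pos: "0 \<le> inner (y - T y) (T (y - T y))"
    and contr: "inner (T y) (T (T y)) \<le> inner (T y) (T y)"
    using assms unfolding positive_contraction_def by (metis inner_commute)+
  from pos have "inner (T y) (T y) \<le> inner y (T y)"
    using selfadjoint contr
    by (simp add: blinfun.diff_right inner_diff_left inner_diff_right inner_commute[of "T y" y])
  then show ?thesis
    by (simp add: power2_norm_eq_inner inner_diff_left inner_diff_right inner_commute[of "T y" y])
qed

lemma positive_contraction_norm_le:
  fixes T :: "'a::real_inner \<Rightarrow>\<^sub>L 'a"
  assumes "positive_contraction T"
  shows "norm (T y) \<le> norm y"
proof (rule power2_le_imp_le)
  show "(norm (T y))\<^sup>2 \<le> (norm y)\<^sup>2"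
    using positive_contraction_norm_diff_sq[OF assms, of y] zero_le_power2[of "norm (y - T y)"]
    by linarith
qed simp

section \<open>Integrals over independent variables\<close>

lemma (in prob_space) nn_integral_indep_var_law:
  assumes indep: "indep_var S X T Y"
    and h: "h \<in> measurable S R" and G: "G \<in> measurable T U"
    and law: "distr M R (\<lambda>\<omega>. h (X \<omega>)) = distr M' R Z" and Z: "Z \<in> measurable M' R"
    and g: "(\<lambda>p. g (fst p) (snd p)) \<in> borel_measurable (R \<Otimes>\<^sub>M U)"
  shows "(\<integral>\<^sup>+\<omega>. g (h (X \<omega>)) (G (Y \<omega>)) \<partial>M) = (\<integral>\<^sup>+\<omega>. (\<integral>\<^sup>+\<eta>. g (Z \<eta>) (G (Y \<omega>)) \<partial>M') \<partial>M)"
proof -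
  from indep have X: "X \<in> measurable M S" and Y: "Y \<in> measurable M T"
    and joint: "distr M S X \<Otimes>\<^sub>M distr M T Y = distr M (S \<Otimes>\<^sub>M T) (\<lambda>\<omega>. (X \<omega>, Y \<omega>))"
    unfolding indep_var_distribution_eq by auto
  interpret PX: prob_space "distr M S X" by (rule prob_space_distr[OF X])
  interpret PY: prob_space "distr M T Y" by (rule prob_space_distr[OF Y])
  interpret P: pair_sigma_finite "distr M S X" "distr M T Y" ..
  have g_hG: "(\<lambda>p. g (h (fst p)) (G (snd p))) \<in> borel_measurable (S \<Otimes>\<^sub>M T)"
    using measurable_compose[OF measurable_Pair[OF measurable_compose[OF measurable_fst h]
          measurable_compose[OF measurable_snd G]] g]
    by simp
  have g_R: "(\<lambda>r. g r u) \<in> borel_measurable R" if "u \<in> space U" for u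
    using measurable_Pair1[OF g that] by simp
  have law_inner: "(\<integral>\<^sup>+x. g (h x) u \<partial>distr M S X) = (\<integral>\<^sup>+\<eta>. g (Z \<eta>) u \<partial>M')"
    if "u \<in> space U" for u
  proof -
    have "(\<integral>\<^sup>+x. g (h x) u \<partial>distr M S X) = (\<integral>\<^sup>+r. g r u \<partial>distr M R (\<lambda>\<omega>. h (X \<omega>)))"
      using X h g_R[OF that]
      by (simp add: nn_integral_distr measurable_compose[OF h] measurable_compose[OF X h])
    also have "\<dots> = (\<integral>\<^sup>+\<eta>. g (Z \<eta>) u \<partial>M')"
      unfolding law using Z g_R[OF that] by (simp add: nn_integral_distr)
    finally show ?thesis .
  qed
  have g_hG_distr: "(\<lambda>p. g (h (fst p)) (G (snd p))) \<in> borel_measurable (distr M S X \<Otimes>\<^sub>M distr M T Y)"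
    using g_hG by (simp add: measurable_cong_sets[OF sets_pair_measure_cong[OF sets_distr sets_distr] refl])
  have "(\<integral>\<^sup>+\<omega>. g (h (X \<omega>)) (G (Y \<omega>)) \<partial>M)
      = (\<integral>\<^sup>+p. g (h (fst p)) (G (snd p)) \<partial>(distr M S X \<Otimes>\<^sub>M distr M T Y))"
    unfolding joint using X Y g_hG by (subst nn_integral_distr) auto
  also have "\<dots> = (\<integral>\<^sup>+y. (\<integral>\<^sup>+x. g (h x) (G y) \<partial>distr M S X) \<partial>distr M T Y)"
    using P.nn_integral_snd[OF g_hG_distr] by simp
  also have "\<dots> = (\<integral>\<^sup>+\<omega>. (\<integral>\<^sup>+x. g (h x) (G (Y \<omega>)) \<partial>distr M S X) \<partial>M)"
    using PX.borel_measurable_nn_integral_fst[OF measurable_pair_swap[OF g_hG_distr]]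
    by (intro nn_integral_distr[OF Y]) simp
  also have "\<dots> = (\<integral>\<^sup>+\<omega>. (\<integral>\<^sup>+\<eta>. g (Z \<eta>) (G (Y \<omega>)) \<partial>M') \<partial>M)"
    using X Y G by (intro nn_integral_cong law_inner) (auto simp: measurable_space)
  finally show ?thesis .
qed

section \<open>Energy sequences\<close>

lemma sum_le_telescoping:
  fixes a b :: "nat \<Rightarrow> real"
  assumes "\<And>n. a (Suc n) + b n \<le> a n"
  shows "(\<Sum>j<n. b j) \<le> a 0 - a n"
proof (induction n)
  case (Suc n)
  then show ?case using assms[of n] by simp
qed simp

lemma geometric_decay:
  fixes a b :: "nat \<Rightarrow> real"
  assumes step: "\<And>n. a (Suc n) + b n \<le> a n" and lower: "\<And>n. C * a n \<le> b n"
    and "C \<le> 1"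
  shows "a n \<le> (1 - C) ^ n * a 0"
proof (induction n)
  case (Suc n)
  have "a (Suc n) \<le> (1 - C) * a n"
    using step[of n] lower[of n] by (simp add: algebra_simps)
  also have "\<dots> \<le> (1 - C) * ((1 - C) ^ n * a 0)"
    using Suc \<open>C \<le> 1\<close> by (intro mult_left_mono) auto
  finally show ?case by simp
qed simp

lemma dissipated_energy_bounds:
  fixes a b :: "nat \<Rightarrow> real"
  assumes step: "\<And>n. a (Suc n) + b n \<le> a n" and lower: "\<And>n. C * a n \<le> b n"
    and "0 \<le> C" and a_nonneg: "\<And>n. 0 \<le> a n"
  shows "summable b" and "C * a 0 \<le> suminf b" and "suminf b \<le> a 0"
proof -
  have b_nonneg: "0 \<le> b n" for n
    using lower[of n] mult_nonneg_nonneg[OF \<open>0 \<le> C\<close> a_nonneg[of n]] by linarith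
  have partial_le: "(\<Sum>j<n. b j) \<le> a 0" for n
    using sum_le_telescoping[of a b n, OF step] a_nonneg[of n] by simp
  show "summable b" by (rule summableI_nonneg_bounded[OF b_nonneg partial_le])
  show "suminf b \<le> a 0" by (rule suminf_le_const[OF \<open>summable b\<close> partial_le])
  have "b 0 \<le> suminf b" using sum_le_suminf[OF \<open>summable b\<close>, of "{0}"] b_nonneg by simp
  then show "C * a 0 \<le> suminf b" using lower[of 0] by simp
qed

lemma nn_integral_norm_sq_eq_integral:
  fixes f :: "'w \<Rightarrow> 'a::real_normed_vector"
  shows "integrable M (\<lambda>\<omega>. (norm (f \<omega>))\<^sup>2) \<Longrightarrow>
    (\<integral>\<^sup>+\<omega>. ennreal ((norm (f \<omega>))\<^sup>2) \<partial>M) = ennreal (\<integral>\<omega>. (norm (f \<omega>))\<^sup>2 \<partial>M)"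
  by (rule nn_integral_eq_integral) auto

lemma AE_tendsto_zero_if_summable_mean_square:
  fixes f :: "nat \<Rightarrow> 'w \<Rightarrow> 'a::real_normed_vector"
  assumes f_measurable: "\<And>n. f n \<in> borel_measurable M"
    and f_integrable: "\<And>n. integrable M (\<lambda>\<omega>. (norm (f n \<omega>))\<^sup>2)"
    and f_summable: "summable (\<lambda>n. \<integral>\<omega>. (norm (f n \<omega>))\<^sup>2 \<partial>M)"
  shows "AE \<omega> in M. (\<lambda>n. f n \<omega>) \<longlonglongrightarrow> 0"
proof -
  have [measurable]: "(\<lambda>\<omega>. (norm (f n \<omega>))\<^sup>2) \<in> borel_measurable M" for n
    using f_measurable by measurable
  have "(\<integral>\<^sup>+\<omega>. (\<Sum>n. ennreal ((norm (f n \<omega>))\<^sup>2)) \<partial>M) = (\<Sum>n. ennreal (\<integral>\<omega>. (norm (f n \<omega>))\<^sup>2 \<partial>M))"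
    by (subst nn_integral_suminf) (simp_all add: nn_integral_eq_integral[OF f_integrable])
  also have "\<dots> \<noteq> \<top>"
    by (rule ennreal_suminf_neq_top[OF f_summable]) simp
  finally have "AE \<omega> in M. (\<Sum>n. ennreal ((norm (f n \<omega>))\<^sup>2)) \<noteq> \<top>"
    by (intro nn_integral_PInf_AE[unfolded infinity_ennreal_def]) auto
  then show ?thesis
  proof (rule eventually_mono)
    fix \<omega> assume "(\<Sum>n. ennreal ((norm (f n \<omega>))\<^sup>2)) \<noteq> \<top>"
    then have "summable (\<lambda>n. (norm (f n \<omega>))\<^sup>2)" by (intro summable_suminf_not_top) auto
    then have "(\<lambda>n. (norm (f n \<omega>))\<^sup>2) \<longlonglongrightarrow> 0" by (rule summable_LIMSEQ_zero)
    then have "(\<lambda>n. sqrt ((norm (f n \<omega>))\<^sup>2)) \<longlonglongrightarrow> sqrt 0" by (rule tendsto_real_sqrt)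
    then show "(\<lambda>n. f n \<omega>) \<longlonglongrightarrow> 0" by (simp add: tendsto_norm_zero_iff)
  qed
qed

section \<open>Products of i.i.d. positive contractions\<close>

locale iid_positive_contractions =
  M: prob_space M + N: prob_space N
  for M :: "'w measure" and N :: "'v measure" +
  fixes \<Psi> :: "'w \<Rightarrow> ('a::real_inner \<Rightarrow>\<^sub>L 'a)" and \<Psi>s :: "nat \<Rightarrow> 'v \<Rightarrow> ('a \<Rightarrow>\<^sub>L 'a)"
  assumes separable: "separable_space TYPE('a)"
    and strongly_measurable_\<Psi>: "strongly_measurable_op M \<Psi>"
    and positive_contraction_\<Psi>: "\<And>\<omega>. \<omega> \<in> space M \<Longrightarrow> positive_contraction (\<Psi> \<omega>)"
    and indep_\<Psi>s: "N.indep_vars (\<lambda>_. SOT_space) \<Psi>s {1..}"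
    and distr_\<Psi>s: "\<And>k. 1 \<le> k \<Longrightarrow> distr N SOT_space (\<Psi>s k) = distr M SOT_space \<Psi>"
begin

lemma borel_measurable_\<Psi>s_apply: "1 \<le> k \<Longrightarrow> (\<lambda>\<omega>. \<Psi>s k \<omega> y) \<in> borel_measurable N"
  using indep_\<Psi>s measurable_compose[OF _ SOT_space_apply_measurable]
  unfolding N.indep_vars_def by auto

lemma borel_measurable_residual: "(\<lambda>\<omega>. prod_compl \<Psi>s n \<omega> x) \<in> borel_measurable N"
  by (rule borel_measurable_prod_compl[OF separable]) (rule borel_measurable_\<Psi>s_apply)

lemma borel_measurable_Top_Suc: "(\<lambda>\<omega>. Top \<Psi>s (Suc n) \<omega> x) \<in> borel_measurable N"
  unfolding Top_Suc_apply
  by (rule borel_measurable_blinfun_apply_strong[OF separable borel_measurable_\<Psi>s_apply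
      borel_measurable_residual]) simp

lemma nn_integral_\<Psi>s_residual:
  assumes "(\<lambda>p. g (fst p) (snd p)) \<in> borel_measurable (SOT_space \<Otimes>\<^sub>M borel)"
  shows "(\<integral>\<^sup>+\<omega>. g (\<Psi>s (Suc n) \<omega>) (prod_compl \<Psi>s n \<omega> x) \<partial>N)
       = (\<integral>\<^sup>+\<omega>. (\<integral>\<^sup>+\<eta>. g (\<Psi> \<eta>) (prod_compl \<Psi>s n \<omega> x) \<partial>M) \<partial>N)"
proof -
  \<comment> \<open>\<open>indep_var\<close> relates two variables with values in the same type, so we separate the
    restrictions of \<open>\<Psi>s\<close> to \<open>{Suc n}\<close> and \<open>{1..n}\<close> and recover \<open>\<Psi>s (Suc n)\<close> and
    the residual as functions of them.\<close>
  define X where "X \<omega> = restrict (\<lambda>i. \<Psi>s i \<omega>) {Suc n}" for \<omega>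
  define Y where "Y \<omega> = restrict (\<lambda>i. \<Psi>s i \<omega>) {1..n}" for \<omega>
  define h :: "(nat \<Rightarrow> 'a \<Rightarrow>\<^sub>L 'a) \<Rightarrow> 'a \<Rightarrow>\<^sub>L 'a" where "h f = f (Suc n)" for f
  define G where "G f = prod_compl (\<lambda>k f. f k) n f x" for f
  have h_X: "h (X \<omega>) = \<Psi>s (Suc n) \<omega>" for \<omega>
    by (simp add: h_def X_def)
  have G_Y: "G (Y \<omega>) = prod_compl \<Psi>s n \<omega> x" for \<omega>
    unfolding G_def Y_def by (subst prod_compl_cong[where \<Phi>'=\<Psi>s and \<omega>'=\<omega>]) auto
  have indep: "prob_space.indep_var N (PiM {Suc n} (\<lambda>_. SOT_space)) X (PiM {1..n} (\<lambda>_. SOT_space)) Y"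
    unfolding X_def Y_def by (rule N.indep_var_restrict[OF indep_\<Psi>s]) auto
  have h: "h \<in> measurable (PiM {Suc n} (\<lambda>_. SOT_space)) SOT_space"
    unfolding h_def by (rule measurable_component_singleton) simp
  have "(\<lambda>f. blinfun_apply (f k) y) \<in> borel_measurable (PiM {1..n} (\<lambda>_. SOT_space))"
    if "k \<in> {1..n}" for k y
    using measurable_compose[OF measurable_component_singleton[OF that] SOT_space_apply_measurable]
    by simp
  then have G: "G \<in> borel_measurable (PiM {1..n} (\<lambda>_. SOT_space))"
    unfolding G_def by (intro borel_measurable_prod_compl[OF separable]) auto
  have law: "distr N SOT_space (\<lambda>\<omega>. h (X \<omega>)) = distr M SOT_space \<Psi>"
    unfolding h_X by (rule distr_\<Psi>s) simp
  have \<Psi>: "\<Psi> \<in> measurable M SOT_space"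
    using strongly_measurable_\<Psi> by (simp add: measurable_SOT_space_iff)
  show ?thesis
    using N.nn_integral_indep_var_law[where X=X and Y=Y and h=h and G=G, OF indep h G law \<Psi> assms]
    unfolding h_X G_Y .
qed

lemma integrable_\<Psi>_apply_sq: "integrable M (\<lambda>\<eta>. (norm (\<Psi> \<eta> y))\<^sup>2)"
proof (rule M.integrable_const_bound)
  show "AE \<eta> in M. norm ((norm (\<Psi> \<eta> y))\<^sup>2) \<le> (norm y)\<^sup>2"
    by (intro AE_I2) (simp add: positive_contraction_norm_le positive_contraction_\<Psi>)
  show "(\<lambda>\<eta>. (norm (\<Psi> \<eta> y))\<^sup>2) \<in> borel_measurable M"
    using strongly_measurable_\<Psi> unfolding strongly_measurable_op_def
    by (intro borel_measurable_continuous_on[where f="\<lambda>z. (norm z)\<^sup>2"]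
        continuous_on_power continuous_on_norm_id) auto
qed

lemma nn_integral_residual_step:
  "(\<integral>\<^sup>+\<omega>. ennreal ((norm (prod_compl \<Psi>s (Suc n) \<omega> x))\<^sup>2) \<partial>N)
     + (\<integral>\<^sup>+\<omega>. ennreal ((norm (Top \<Psi>s (Suc n) \<omega> x))\<^sup>2) \<partial>N)
   \<le> (\<integral>\<^sup>+\<omega>. ennreal ((norm (prod_compl \<Psi>s n \<omega> x))\<^sup>2) \<partial>N)"
proof -
  define g where "g T y = ennreal ((norm (y - T y))\<^sup>2) + ennreal ((norm (T y))\<^sup>2)"
    for T :: "'a \<Rightarrow>\<^sub>L 'a" and y
  note [measurable] = SOT_space_pair_apply_measurable[OF separable]
    borel_measurable_residual borel_measurable_Top_Suc
  have "(\<lambda>p. g (fst p) (snd p)) \<in> borel_measurable (SOT_space \<Otimes>\<^sub>M borel)"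
    unfolding g_def by measurable
  have "(\<integral>\<^sup>+\<omega>. ennreal ((norm (prod_compl \<Psi>s (Suc n) \<omega> x))\<^sup>2) \<partial>N)
      + (\<integral>\<^sup>+\<omega>. ennreal ((norm (Top \<Psi>s (Suc n) \<omega> x))\<^sup>2) \<partial>N)
      = (\<integral>\<^sup>+\<omega>. ennreal ((norm (prod_compl \<Psi>s (Suc n) \<omega> x))\<^sup>2)
          + ennreal ((norm (Top \<Psi>s (Suc n) \<omega> x))\<^sup>2) \<partial>N)"
    by (rule nn_integral_add[symmetric]) measurable
  also have "\<dots> = (\<integral>\<^sup>+\<omega>. g (\<Psi>s (Suc n) \<omega>) (prod_compl \<Psi>s n \<omega> x) \<partial>N)"
    by (simp add: g_def prod_compl_Suc_apply Top_Suc_apply)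
  also have "\<dots> = (\<integral>\<^sup>+\<omega>. (\<integral>\<^sup>+\<eta>. g (\<Psi> \<eta>) (prod_compl \<Psi>s n \<omega> x) \<partial>M) \<partial>N)"
    by (rule nn_integral_\<Psi>s_residual) fact
  also have "\<dots> \<le> (\<integral>\<^sup>+\<omega>. (\<integral>\<^sup>+\<eta>. ennreal ((norm (prod_compl \<Psi>s n \<omega> x))\<^sup>2) \<partial>M) \<partial>N)"
    unfolding g_def
    by (intro nn_integral_mono)
      (simp add: positive_contraction_norm_diff_sq positive_contraction_\<Psi> flip: ennreal_plus)
  finally show ?thesis by (simp add: M.emeasure_space_1)
qed

lemma nn_integral_residual_le:
  "(\<integral>\<^sup>+\<omega>. ennreal ((norm (prod_compl \<Psi>s n \<omega> x))\<^sup>2) \<partial>N) \<le> ennreal ((norm x)\<^sup>2)"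
proof (induction n)
  case (Suc n)
  have "(\<integral>\<^sup>+\<omega>. ennreal ((norm (prod_compl \<Psi>s (Suc n) \<omega> x))\<^sup>2) \<partial>N)
      \<le> (\<integral>\<^sup>+\<omega>. ennreal ((norm (prod_compl \<Psi>s (Suc n) \<omega> x))\<^sup>2) \<partial>N)
        + (\<integral>\<^sup>+\<omega>. ennreal ((norm (Top \<Psi>s (Suc n) \<omega> x))\<^sup>2) \<partial>N)"
    by (intro add_increasing2) auto
  also have "\<dots> \<le> (\<integral>\<^sup>+\<omega>. ennreal ((norm (prod_compl \<Psi>s n \<omega> x))\<^sup>2) \<partial>N)"
    by (rule nn_integral_residual_step)
  finally show ?case using Suc by simp
qed (simp add: N.emeasure_space_1)

lemma integrable_residual_sq: "integrable N (\<lambda>\<omega>. (norm (prod_compl \<Psi>s n \<omega> x))\<^sup>2)"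
proof (rule integrableI_bounded)
  show "(\<lambda>\<omega>. (norm (prod_compl \<Psi>s n \<omega> x))\<^sup>2) \<in> borel_measurable N"
    using borel_measurable_residual by measurable
  show "(\<integral>\<^sup>+\<omega>. ennreal (norm ((norm (prod_compl \<Psi>s n \<omega> x))\<^sup>2)) \<partial>N) < \<infinity>"
    using nn_integral_residual_le[of n x] by (simp add: le_less_trans)
qed

lemma integrable_Top_Suc_sq: "integrable N (\<lambda>\<omega>. (norm (Top \<Psi>s (Suc n) \<omega> x))\<^sup>2)"
proof (rule integrableI_bounded)
  show "(\<lambda>\<omega>. (norm (Top \<Psi>s (Suc n) \<omega> x))\<^sup>2) \<in> borel_measurable N"
    using borel_measurable_Top_Suc by measurable
  have "(\<integral>\<^sup>+\<omega>. ennreal ((norm (Top \<Psi>s (Suc n) \<omega> x))\<^sup>2) \<partial>N) \<le> ennreal ((norm x)\<^sup>2)"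
  proof -
    have "(\<integral>\<^sup>+\<omega>. ennreal ((norm (Top \<Psi>s (Suc n) \<omega> x))\<^sup>2) \<partial>N)
        \<le> (\<integral>\<^sup>+\<omega>. ennreal ((norm (prod_compl \<Psi>s (Suc n) \<omega> x))\<^sup>2) \<partial>N)
          + (\<integral>\<^sup>+\<omega>. ennreal ((norm (Top \<Psi>s (Suc n) \<omega> x))\<^sup>2) \<partial>N)"
      by (intro add_increasing) auto
    also have "\<dots> \<le> (\<integral>\<^sup>+\<omega>. ennreal ((norm (prod_compl \<Psi>s n \<omega> x))\<^sup>2) \<partial>N)"
      by (rule nn_integral_residual_step)
    also have "\<dots> \<le> ennreal ((norm x)\<^sup>2)"
      by (rule nn_integral_residual_le)
    finally show ?thesis .
  qed
  then show "(\<integral>\<^sup>+\<omega>. ennreal (norm ((norm (Top \<Psi>s (Suc n) \<omega> x))\<^sup>2)) \<partial>N) < \<infinity>"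
    by (simp add: le_less_trans)
qed

lemma residual_energy_step:
  "(\<integral>\<omega>. (norm (prod_compl \<Psi>s (Suc n) \<omega> x))\<^sup>2 \<partial>N) + (\<integral>\<omega>. (norm (Top \<Psi>s (Suc n) \<omega> x))\<^sup>2 \<partial>N)
   \<le> (\<integral>\<omega>. (norm (prod_compl \<Psi>s n \<omega> x))\<^sup>2 \<partial>N)"
proof -
  let ?a = "\<integral>\<omega>. (norm (prod_compl \<Psi>s (Suc n) \<omega> x))\<^sup>2 \<partial>N"
    and ?b = "\<integral>\<omega>. (norm (Top \<Psi>s (Suc n) \<omega> x))\<^sup>2 \<partial>N"
    and ?c = "\<integral>\<omega>. (norm (prod_compl \<Psi>s n \<omega> x))\<^sup>2 \<partial>N"
  have "ennreal (?a + ?b) = ennreal ?a + ennreal ?b"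
    by (intro ennreal_plus integral_nonneg_AE) auto
  also have "\<dots> \<le> ennreal ?c"
    using nn_integral_residual_step[of n x]
    by (simp only: nn_integral_norm_sq_eq_integral integrable_residual_sq integrable_Top_Suc_sq)
  finally show ?thesis
    by (subst (asm) ennreal_le_iff) (auto intro: integral_nonneg_AE)
qed

lemma residual_energy_lower_bound:
  assumes "0 \<le> c" and frame_lower: "\<And>y. c * (norm y)\<^sup>2 \<le> (\<integral>\<eta>. (norm (\<Psi> \<eta> y))\<^sup>2 \<partial>M)"
  shows "c * (\<integral>\<omega>. (norm (prod_compl \<Psi>s n \<omega> x))\<^sup>2 \<partial>N) \<le> (\<integral>\<omega>. (norm (Top \<Psi>s (Suc n) \<omega> x))\<^sup>2 \<partial>N)"
proof -
  define g where "g T y = ennreal ((norm (T y))\<^sup>2)" for T :: "'a \<Rightarrow>\<^sub>L 'a" and y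
  note [measurable] = SOT_space_pair_apply_measurable(1)[OF separable] borel_measurable_residual
  have "(\<lambda>p. g (fst p) (snd p)) \<in> borel_measurable (SOT_space \<Otimes>\<^sub>M borel)"
    unfolding g_def by measurable
  have lower: "ennreal c * ennreal ((norm y)\<^sup>2) \<le> (\<integral>\<^sup>+\<eta>. g (\<Psi> \<eta>) y \<partial>M)" for y
    using frame_lower[of y] \<open>0 \<le> c\<close>
    by (simp add: g_def nn_integral_norm_sq_eq_integral[OF integrable_\<Psi>_apply_sq] flip: ennreal_mult)
  have "ennreal (c * (\<integral>\<omega>. (norm (prod_compl \<Psi>s n \<omega> x))\<^sup>2 \<partial>N))
      = (\<integral>\<^sup>+\<omega>. ennreal c * ennreal ((norm (prod_compl \<Psi>s n \<omega> x))\<^sup>2) \<partial>N)"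
    using \<open>0 \<le> c\<close>
    by (simp add: nn_integral_cmult ennreal_mult integral_nonneg_AE
        flip: nn_integral_norm_sq_eq_integral[OF integrable_residual_sq])
  also have "\<dots> \<le> (\<integral>\<^sup>+\<omega>. (\<integral>\<^sup>+\<eta>. g (\<Psi> \<eta>) (prod_compl \<Psi>s n \<omega> x) \<partial>M) \<partial>N)"
    by (intro nn_integral_mono lower)
  also have "\<dots> = (\<integral>\<^sup>+\<omega>. g (\<Psi>s (Suc n) \<omega>) (prod_compl \<Psi>s n \<omega> x) \<partial>N)"
    by (rule nn_integral_\<Psi>s_residual[symmetric]) fact
  also have "\<dots> = ennreal (\<integral>\<omega>. (norm (Top \<Psi>s (Suc n) \<omega> x))\<^sup>2 \<partial>N)"
    by (simp add: g_def Top_Suc_apply nn_integral_norm_sq_eq_integral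
        integrable_Top_Suc_sq[unfolded Top_Suc_apply])
  finally show ?thesis
    by (subst (asm) ennreal_le_iff) (auto intro: integral_nonneg_AE)
qed

end

locale iid_frame = iid_positive_contractions +
  fixes C :: real
  assumes C_pos: "0 < C" and C_lt1: "C < 1"
    and frame_lower: "\<And>y. C * (norm y)\<^sup>2 \<le> (\<integral>\<eta>. (norm (\<Psi> \<eta> y))\<^sup>2 \<partial>M)"
begin

lemmas residual_energy_lower = residual_energy_lower_bound[OF less_imp_le[OF C_pos] frame_lower]

lemma residual_energy_le_geometric:
  "(\<integral>\<omega>. (norm (prod_compl \<Psi>s n \<omega> x))\<^sup>2 \<partial>N) \<le> (1 - C) ^ n * (norm x)\<^sup>2"
  using geometric_decay[where a="\<lambda>n. \<integral>\<omega>. (norm (prod_compl \<Psi>s n \<omega> x))\<^sup>2 \<partial>N"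
      and b="\<lambda>n. \<integral>\<omega>. (norm (Top \<Psi>s (Suc n) \<omega> x))\<^sup>2 \<partial>N",
      OF residual_energy_step residual_energy_lower] C_lt1
  by (simp add: N.prob_space)

lemma mean_square_convergence:
  "(\<lambda>n. \<integral>\<omega>. (norm (x - (\<Sum>k\<in>{1..n}. Top \<Psi>s k \<omega> x)))\<^sup>2 \<partial>N) \<longlonglongrightarrow> 0"
  unfolding diff_sum_Top_eq_prod_compl
proof (rule tendsto_sandwich[of "\<lambda>_. 0" _ _ "\<lambda>n. (1 - C) ^ n * (norm x)\<^sup>2"])
  show "(\<lambda>n. (1 - C) ^ n * (norm x)\<^sup>2) \<longlonglongrightarrow> 0"
    using C_pos C_lt1 by (intro tendsto_mult_left_zero LIMSEQ_power_zero) auto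
qed (auto intro!: always_eventually integral_nonneg_AE residual_energy_le_geometric)

lemma AE_convergence: "AE \<omega> in N. (\<lambda>n. \<Sum>k\<in>{1..n}. Top \<Psi>s k \<omega> x) \<longlonglongrightarrow> x"
proof -
  have "summable (\<lambda>n. \<integral>\<omega>. (norm (prod_compl \<Psi>s n \<omega> x))\<^sup>2 \<partial>N)"
  proof (rule summable_comparison_test')
    show "summable (\<lambda>n. (1 - C) ^ n * (norm x)\<^sup>2)"
      using C_pos C_lt1 by (intro summable_mult2 summable_geometric) auto
  qed (auto intro: integral_nonneg_AE residual_energy_le_geometric)
  then have "AE \<omega> in N. (\<lambda>n. prod_compl \<Psi>s n \<omega> x) \<longlonglongrightarrow> 0"
    by (intro AE_tendsto_zero_if_summable_mean_square borel_measurable_residual integrable_residual_sq)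
  then show ?thesis
  proof (rule eventually_mono)
    fix \<omega> assume "(\<lambda>n. prod_compl \<Psi>s n \<omega> x) \<longlonglongrightarrow> 0"
    then have "(\<lambda>n. x - prod_compl \<Psi>s n \<omega> x) \<longlonglongrightarrow> x - 0"
      by (intro tendsto_diff tendsto_const)
    then show "(\<lambda>n. \<Sum>k\<in>{1..n}. Top \<Psi>s k \<omega> x) \<longlonglongrightarrow> x"
      by (simp flip: diff_sum_Top_eq_prod_compl)
  qed
qed

lemma frame_bounds:
  "convergent (\<lambda>n. \<integral>\<omega>. (\<Sum>k\<in>{1..n}. (norm (Top \<Psi>s k \<omega> x))\<^sup>2) \<partial>N)
   \<and> C * (norm x)\<^sup>2 \<le> lim (\<lambda>n. \<integral>\<omega>. (\<Sum>k\<in>{1..n}. (norm (Top \<Psi>s k \<omega> x))\<^sup>2) \<partial>N)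
   \<and> lim (\<lambda>n. \<integral>\<omega>. (\<Sum>k\<in>{1..n}. (norm (Top \<Psi>s k \<omega> x))\<^sup>2) \<partial>N) \<le> (norm x)\<^sup>2"
proof -
  let ?b = "\<lambda>j. \<integral>\<omega>. (norm (Top \<Psi>s (Suc j) \<omega> x))\<^sup>2 \<partial>N"
  have partial_sums: "(\<lambda>n. \<integral>\<omega>. (\<Sum>k\<in>{1..n}. (norm (Top \<Psi>s k \<omega> x))\<^sup>2) \<partial>N) = (\<lambda>n. \<Sum>j<n. ?b j)"
    by (simp add: sum.atLeast1_atMost_eq integrable_Top_Suc_sq)
  note bounds = dissipated_energy_bounds[where a="\<lambda>n. \<integral>\<omega>. (norm (prod_compl \<Psi>s n \<omega> x))\<^sup>2 \<partial>N"
      and b="?b", OF residual_energy_step residual_energy_lower]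
  have "(\<lambda>n. \<Sum>j<n. ?b j) \<longlonglongrightarrow> suminf ?b"
    using bounds(1) C_pos by (intro summable_LIMSEQ) (auto intro: integral_nonneg_AE)
  then show ?thesis
    unfolding partial_sums using bounds(2,3) C_pos
    by (auto simp: convergent_def limI N.prob_space intro: integral_nonneg_AE)
qed

end

theorem mainTheorem2:
  fixes M :: "'w measure" and N :: "'v measure"
    and \<Psi> :: "'w \<Rightarrow> ('a::{real_inner, complete_space} \<Rightarrow>\<^sub>L 'a)"
    and \<Psi>s :: "nat \<Rightarrow> 'v \<Rightarrow> ('a \<Rightarrow>\<^sub>L 'a)"
    and C :: real
  assumes sep: "separable_space TYPE('a)"
    and probM: "prob_space M"
    and meas: "strongly_measurable_op M \<Psi>"
    and pos: "\<And>\<omega>. \<omega> \<in> space M \<Longrightarrow> positive_contraction (\<Psi> \<omega>)"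
    and C_pos: "0 < C" and C_lt1: "C < 1"
    and frame_lower: "\<And>x. (\<integral>\<omega>. (norm (\<Psi> \<omega> x))\<^sup>2 \<partial>M) \<ge> C * (norm x)\<^sup>2"
    and probN: "prob_space N"
    and meas_copies: "\<And>k. k \<ge> 1 \<Longrightarrow> strongly_measurable_op N (\<Psi>s k)"
    and indep: "prob_space.indep_vars N (\<lambda>_. SOT_space) \<Psi>s {1..}"
    and ident: "\<And>k. k \<ge> 1 \<Longrightarrow> distr N SOT_space (\<Psi>s k) = distr M SOT_space \<Psi>"
  shows "(\<forall>x. (\<lambda>n. \<integral>\<omega>. (norm (x - (\<Sum>k\<in>{1..n}. Top \<Psi>s k \<omega> x)))\<^sup>2 \<partial>N)
              \<longlonglongrightarrow> 0)
       \<and> (\<forall>x. AE \<omega> in N. (\<lambda>n. \<Sum>k\<in>{1..n}. Top \<Psi>s k \<omega> x) \<longlonglongrightarrow> x)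
       \<and> (\<forall>x. convergent (\<lambda>n. \<integral>\<omega>. (\<Sum>k\<in>{1..n}. (norm (Top \<Psi>s k \<omega> x))\<^sup>2) \<partial>N)
              \<and> C * (norm x)\<^sup>2 \<le> lim (\<lambda>n. \<integral>\<omega>. (\<Sum>k\<in>{1..n}. (norm (Top \<Psi>s k \<omega> x))\<^sup>2) \<partial>N)
              \<and> lim (\<lambda>n. \<integral>\<omega>. (\<Sum>k\<in>{1..n}. (norm (Top \<Psi>s k \<omega> x))\<^sup>2) \<partial>N) \<le> (norm x)\<^sup>2)"
proof -
  interpret iid_frame M N \<Psi> \<Psi>s C
    by (intro iid_frame.intro iid_positive_contractions.intro iid_frame_axioms.intro
        iid_positive_contractions_axioms.intro) (fact assms)+
  show ?thesis
    using mean_square_convergence AE_convergence frame_bounds by blast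
qed

end
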